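(* Let $n\ge1$. For any ultrametric tree with $n$ leaves whose common distance from the root is $1$, with leaf distance matrix $D$, the matrix \[ \Big(1-\frac1n\Big)\mathbf{1}_{n\times n}-\frac12 D \] is positive semidefinite. Moreover, $1-\frac1n$ is the smallest such constant: for every real $c<1-\frac1n$ there is an ultrametric tree with $n$ leaves at common distance $1$ from the root for which $c\,\mathbf{1}_{n\times n}-\frac12 D$ is not positive semidefinite.
   Context: An ultrametric tree is a rooted tree with nonnegative edge lengths such that all leaves are at the same distance from the root; the distance between two vertices is the sum of edge lengths along the unique path joining them. For a tree with leaves labeled $1,\dots,n$, the leaf distance matrix $D$ is the $n\times n$ matrix whose $(i,j)$ entry is the distance between leaves $i$ and $j$. $\mathbf{1}_{n\times n}$ is the $n\times n$ all-ones matrix. *)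

theory Defs
  imports Complex_Main
begin

text \<open>A rooted tree on a finite vertex set V with root r, given by a parent map par:
  every vertex other than the root has its parent in V, and every vertex reaches
  the root by iterating par. (This forces acyclicity.) Tree edges are the pairs
  {v, par v} for v in V - {r}; the length of the edge {v, par v} is w v.\<close>
definition rooted_tree :: "'v set \<Rightarrow> 'v \<Rightarrow> ('v \<Rightarrow> 'v) \<Rightarrow> bool" where
  "rooted_tree V r par \<longleftrightarrow> finite V \<and> r \<in> V \<and>
     (\<forall>v\<in>V. v \<noteq> r \<longrightarrow> par v \<in> V) \<and> (\<forall>v\<in>V. \<exists>k. (par ^^ k) v = r)"

definition height_steps :: "'v \<Rightarrow> ('v \<Rightarrow> 'v) \<Rightarrow> 'v \<Rightarrow> nat" where
  "height_steps r par v = (LEAST k. (par ^^ k) v = r)"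

text \<open>Non-root vertices on the path from v to the root (v included when v is not the root);
  each such vertex x stands for the edge {x, par x}.\<close>
definition up_path :: "'v \<Rightarrow> ('v \<Rightarrow> 'v) \<Rightarrow> 'v \<Rightarrow> 'v set" where
  "up_path r par v = {(par ^^ k) v | k. k < height_steps r par v}"

text \<open>Distance between two vertices: sum of the edge lengths along the unique path joining
  them, i.e. over the edges lying on exactly one of the two root paths.\<close>
definition tree_dist :: "'v \<Rightarrow> ('v \<Rightarrow> 'v) \<Rightarrow> ('v \<Rightarrow> real) \<Rightarrow> 'v \<Rightarrow> 'v \<Rightarrow> real" where
  "tree_dist r par w u v =
     (\<Sum>x \<in> (up_path r par u - up_path r par v) \<union> (up_path r par v - up_path r par u). w x)"

definition tree_leaves :: "'v set \<Rightarrow> 'v \<Rightarrow> ('v \<Rightarrow> 'v) \<Rightarrow> 'v set" where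
  "tree_leaves V r par = {v \<in> V. v \<noteq> r \<and> \<not> (\<exists>x\<in>V. x \<noteq> r \<and> par x = v)}"

definition ultrametric_tree1 ::
  "'v set \<Rightarrow> 'v \<Rightarrow> ('v \<Rightarrow> 'v) \<Rightarrow> ('v \<Rightarrow> real) \<Rightarrow> (nat \<Rightarrow> 'v) \<Rightarrow> nat \<Rightarrow> bool" where
  "ultrametric_tree1 V r par w leaf n \<longleftrightarrow>
     rooted_tree V r par \<and> (\<forall>v\<in>V. v \<noteq> r \<longrightarrow> 0 \<le> w v) \<and>
     bij_betw leaf {1..n} (tree_leaves V r par) \<and>
     (\<forall>v \<in> tree_leaves V r par. tree_dist r par w v r = 1)"

definition leaf_dist_matrix ::
  "'v \<Rightarrow> ('v \<Rightarrow> 'v) \<Rightarrow> ('v \<Rightarrow> real) \<Rightarrow> (nat \<Rightarrow> 'v) \<Rightarrow> nat \<Rightarrow> nat \<Rightarrow> real" where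
  "leaf_dist_matrix r par w leaf i j = tree_dist r par w (leaf i) (leaf j)"

definition psd :: "nat \<Rightarrow> (nat \<Rightarrow> nat \<Rightarrow> real) \<Rightarrow> bool" where
  "psd n M \<longleftrightarrow> (\<forall>i\<in>{1..n}. \<forall>j\<in>{1..n}. M i j = M j i) \<and>
     (\<forall>x :: nat \<Rightarrow> real. 0 \<le> (\<Sum>i=1..n. \<Sum>j=1..n. x i * M i j * x j))"

end

theory Submission
  imports Defs "HOL-Analysis.Convex"
begin

text \<open>Let \<open>P\<^sub>i\<close> be the set of edges on the path from leaf \<open>i\<close> to the root. All these paths
  have weight 1, so \<open>1 - D\<^sub>i\<^sub>j/2 = w(P\<^sub>i \<inter> P\<^sub>j)\<close>, and the quadratic form of \<open>1 - D/2\<close> at \<open>x\<close>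
  is \<open>\<Sum>\<^sub>e w\<^sub>e X\<^sub>e\<^sup>2\<close>, where \<open>X\<^sub>e\<close> sums \<open>x\<^sub>i\<close> over the leaves below the edge \<open>e\<close>. Since
  \<open>\<Sum>\<^sub>e w\<^sub>e X\<^sub>e = \<Sum>\<^sub>i x\<^sub>i\<close> and \<open>\<Sum>\<^sub>e w\<^sub>e \<le> n\<close>, the weighted Cauchy-Schwarz inequality gives
  \<open>(\<Sum>\<^sub>i x\<^sub>i)\<^sup>2 \<le> n \<Sum>\<^sub>e w\<^sub>e X\<^sub>e\<^sup>2\<close>, which is the first claim. For sharpness take the star with
  \<open>n\<close> unit edges: there \<open>D = 2(\<one> - I)\<close>, and at \<open>x = (1,\<dots>,1)\<close> the form of \<open>c \<one> - D/2\<close> is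
  \<open>n(n(c - 1) + 1)\<close>, negative exactly when \<open>c < 1 - 1/n\<close>.\<close>

lemma weighted_Cauchy_Schwarz_sum:
  fixes w a :: "'a \<Rightarrow> real"
  assumes "\<And>i. i \<in> I \<Longrightarrow> 0 \<le> w i"
  shows "(\<Sum>i\<in>I. w i * a i)\<^sup>2 \<le> (\<Sum>i\<in>I. w i) * (\<Sum>i\<in>I. w i * (a i)\<^sup>2)"
proof -
  have "(\<Sum>i\<in>I. sqrt (w i) * (sqrt (w i) * a i))\<^sup>2
      \<le> (\<Sum>i\<in>I. (sqrt (w i))\<^sup>2) * (\<Sum>i\<in>I. (sqrt (w i) * a i)\<^sup>2)"
    by (rule Cauchy_Schwarz_ineq_sum)
  with assms show ?thesis
    by (simp add: power_mult_distrib flip: mult.assoc cong: sum.cong)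
qed

lemma sum_UN_le:
  fixes f :: "'a \<Rightarrow> 'b::ordered_ab_group_add"
  assumes "finite I" "\<And>i. i \<in> I \<Longrightarrow> finite (A i)" "\<And>x. x \<in> (\<Union>i\<in>I. A i) \<Longrightarrow> 0 \<le> f x"
  shows "sum f (\<Union>i\<in>I. A i) \<le> (\<Sum>i\<in>I. sum f (A i))"
  using assms
proof (induction I rule: finite_induct)
  case (insert i I)
  have "0 \<le> sum f (A i \<inter> (\<Union>j\<in>I. A j))"
    using insert.prems by (intro sum_nonneg) auto
  then have "sum f (A i \<union> (\<Union>j\<in>I. A j)) \<le> sum f (A i) + sum f (\<Union>j\<in>I. A j)"
    using insert by (simp add: sum_Un)
  also have "\<dots> \<le> sum f (A i) + (\<Sum>j\<in>I. sum f (A j))"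
    using insert by (intro add_left_mono insert.IH) auto
  finally show ?case using insert.hyps by simp
qed simp

lemma sum_sym_diff:
  fixes f :: "'a \<Rightarrow> 'b::ring_1"
  assumes "finite A" "finite B"
  shows "sum f (sym_diff A B) = sum f A + sum f B - 2 * sum f (A \<inter> B)"
proof -
  have "sum f (sym_diff A B) = sum f (A - B) + sum f (B - A)"
    using assms by (intro sum.union_disjoint) auto
  then show ?thesis
    using assms sum_Un[of A B f] sum_Un2[of A B f] by (simp add: algebra_simps mult_2)
qed

lemma quadratic_form_inter_weights:
  fixes w x :: "_ \<Rightarrow> real"
  assumes "finite I" "finite E" "\<And>i. i \<in> I \<Longrightarrow> P i \<subseteq> E"
  shows "(\<Sum>i\<in>I. \<Sum>j\<in>I. x i * sum w (P i \<inter> P j) * x j)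
       = (\<Sum>e\<in>E. w e * (\<Sum>i\<in>{i\<in>I. e \<in> P i}. x i)\<^sup>2)"
proof -
  define y where "y e i = (if e \<in> P i then x i else 0)" for e i
  have inter: "sum w (P i \<inter> P j) = (\<Sum>e\<in>E. if e \<in> P i \<and> e \<in> P j then w e else 0)"
    if "i \<in> I" for i j
  proof -
    have "P i \<inter> P j = E \<inter> {e. e \<in> P i \<and> e \<in> P j}" using assms(3)[OF that] by blast
    then show ?thesis using assms(2) by (simp add: sum.inter_restrict)
  qed
  have square: "(\<Sum>i\<in>{i\<in>I. e \<in> P i}. x i)\<^sup>2 = (\<Sum>i\<in>I. \<Sum>j\<in>I. y e i * y e j)" for e
  proof -
    have "(\<Sum>i\<in>{i\<in>I. e \<in> P i}. x i) = (\<Sum>i\<in>I. y e i)"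
      unfolding y_def using assms(1) by (rule sum.inter_filter)
    then show ?thesis by (simp add: power2_eq_square sum_product)
  qed
  have "(\<Sum>i\<in>I. \<Sum>j\<in>I. x i * sum w (P i \<inter> P j) * x j)
      = (\<Sum>i\<in>I. \<Sum>j\<in>I. \<Sum>e\<in>E. w e * (y e i * y e j))"
  proof (intro sum.cong refl)
    fix i j assume "i \<in> I"
    have "x i * sum w (P i \<inter> P j) * x j
        = (\<Sum>e\<in>E. x i * (if e \<in> P i \<and> e \<in> P j then w e else 0) * x j)"
      by (simp add: inter[OF \<open>i \<in> I\<close>] sum_distrib_left sum_distrib_right)
    also have "\<dots> = (\<Sum>e\<in>E. w e * (y e i * y e j))"
      by (intro sum.cong) (auto simp: y_def)
    finally show "x i * sum w (P i \<inter> P j) * x j = (\<Sum>e\<in>E. w e * (y e i * y e j))" .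
  qed
  also have "\<dots> = (\<Sum>e\<in>E. \<Sum>i\<in>I. \<Sum>j\<in>I. w e * (y e i * y e j))"
    by (simp only: sum.swap[of _ E])
  also have "\<dots> = (\<Sum>e\<in>E. w e * (\<Sum>i\<in>{i\<in>I. e \<in> P i}. x i)\<^sup>2)"
    by (simp add: square sum_distrib_left)
  finally show ?thesis .
qed

lemma linear_form_inter_weights:
  fixes w x :: "_ \<Rightarrow> real"
  assumes "finite I" "finite E" "\<And>i. i \<in> I \<Longrightarrow> P i \<subseteq> E"
  shows "(\<Sum>e\<in>E. w e * (\<Sum>i\<in>{i\<in>I. e \<in> P i}. x i)) = (\<Sum>i\<in>I. x i * sum w (P i))"
proof -
  have "(\<Sum>e\<in>E. w e * (\<Sum>i\<in>{i\<in>I. e \<in> P i}. x i))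
      = (\<Sum>e\<in>E. \<Sum>i\<in>I. if e \<in> P i then w e * x i else 0)"
    using assms(1) by (simp add: sum.inter_filter sum_distrib_left if_distrib cong: if_cong)
  also have "\<dots> = (\<Sum>i\<in>I. \<Sum>e\<in>E. if e \<in> P i then w e * x i else 0)"
    by (rule sum.swap)
  also have "\<dots> = (\<Sum>i\<in>I. x i * sum w (P i))"
  proof (rule sum.cong)
    fix i assume "i \<in> I"
    then have "P i = E \<inter> P i" using assms(3) by blast
    then have "sum w (P i) = (\<Sum>e\<in>E. if e \<in> P i then w e else 0)"
      using sum.inter_restrict[OF assms(2)] by metis
    then show "(\<Sum>e\<in>E. if e \<in> P i then w e * x i else 0) = x i * sum w (P i)"
      by (simp add: sum_distrib_left if_distrib mult.commute cong: if_cong)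
  qed simp
  finally show ?thesis .
qed

lemma mean_square_le_quadratic_form_inter_weights:
  fixes w x :: "_ \<Rightarrow> real"
  assumes I: "finite I" and fin: "\<And>i. i \<in> I \<Longrightarrow> finite (P i)"
    and nonneg: "\<And>e. e \<in> (\<Union>i\<in>I. P i) \<Longrightarrow> 0 \<le> w e"
    and unit: "\<And>i. i \<in> I \<Longrightarrow> sum w (P i) = 1"
  shows "(\<Sum>i\<in>I. x i)\<^sup>2 / card I \<le> (\<Sum>i\<in>I. \<Sum>j\<in>I. x i * sum w (P i \<inter> P j) * x j)"
proof -
  define E where "E = (\<Union>i\<in>I. P i)"
  define X where "X e = (\<Sum>i\<in>{i\<in>I. e \<in> P i}. x i)" for e
  have E: "finite E" "\<And>i. i \<in> I \<Longrightarrow> P i \<subseteq> E"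
    using I fin by (auto simp: E_def)
  have quadratic: "(\<Sum>i\<in>I. \<Sum>j\<in>I. x i * sum w (P i \<inter> P j) * x j) = (\<Sum>e\<in>E. w e * (X e)\<^sup>2)"
    unfolding X_def using I E by (rule quadratic_form_inter_weights)
  have "(\<Sum>e\<in>E. w e * X e) = (\<Sum>i\<in>I. x i * sum w (P i))"
    unfolding X_def using I E by (rule linear_form_inter_weights)
  then have linear: "(\<Sum>i\<in>I. x i) = (\<Sum>e\<in>E. w e * X e)"
    by (simp add: unit)
  have "sum w E \<le> (\<Sum>i\<in>I. sum w (P i))"
    unfolding E_def using I fin nonneg by (rule sum_UN_le)
  then have total: "sum w E \<le> card I"
    by (simp add: unit)
  have form_nonneg: "0 \<le> (\<Sum>e\<in>E. w e * (X e)\<^sup>2)"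
    using nonneg by (intro sum_nonneg) (simp add: E_def)
  have "(\<Sum>i\<in>I. x i)\<^sup>2 \<le> sum w E * (\<Sum>e\<in>E. w e * (X e)\<^sup>2)"
    unfolding linear using nonneg by (intro weighted_Cauchy_Schwarz_sum) (simp add: E_def)
  also have "\<dots> \<le> card I * (\<Sum>e\<in>E. w e * (X e)\<^sup>2)"
    using total form_nonneg by (rule mult_right_mono)
  finally show ?thesis
    unfolding quadratic using form_nonneg by (cases "card I = 0") (simp_all add: field_simps)
qed

lemma up_path_subset:
  assumes "v \<in> V" and "\<forall>u\<in>V. u \<noteq> r \<longrightarrow> par u \<in> V"
  shows "up_path r par v \<subseteq> V - {r}"
proof -
  have below: "(par ^^ k) v \<noteq> r" if "k < height_steps r par v" for k
    using that not_less_Least unfolding height_steps_def by blast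
  have "(par ^^ k) v \<in> V" if "k < height_steps r par v" for k
    using that
  proof (induction k)
    case (Suc k)
    then show ?case using assms(2) below[of k] by simp
  qed (use assms(1) in simp)
  then show ?thesis
    using below unfolding up_path_def by blast
qed

lemma finite_up_path [simp]: "finite (up_path r par v)"
  unfolding up_path_def by simp

lemma up_path_root [simp]: "up_path r par r = {}"
  unfolding up_path_def height_steps_def by (simp add: Least_eq_0)

lemma tree_dist_root: "tree_dist r par w v r = sum w (up_path r par v)"
  by (simp add: tree_dist_def)

lemma tree_dist_commute: "tree_dist r par w u v = tree_dist r par w v u"
  by (simp add: tree_dist_def Un_commute)

lemma tree_dist_eq_sum_up_paths:
  "tree_dist r par w u v = sum w (up_path r par u) + sum w (up_path r par v)
     - 2 * sum w (up_path r par u \<inter> up_path r par v)"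
  unfolding tree_dist_def by (simp add: sum_sym_diff)

lemma ultrametric_tree1_leaf_weights:
  assumes T: "ultrametric_tree1 V r par w leaf n" and i: "i \<in> {1..n}"
  shows "sum w (up_path r par (leaf i)) = 1"
    and "\<And>e. e \<in> up_path r par (leaf i) \<Longrightarrow> 0 \<le> w e"
proof -
  have leaf: "leaf i \<in> tree_leaves V r par"
    using T i unfolding ultrametric_tree1_def bij_betw_def by blast
  then show "sum w (up_path r par (leaf i)) = 1"
    using T unfolding ultrametric_tree1_def by (simp add: tree_dist_root)
  have "up_path r par (leaf i) \<subseteq> V - {r}"
    using T leaf
    by (intro up_path_subset) (auto simp: ultrametric_tree1_def rooted_tree_def tree_leaves_def)
  then show "0 \<le> w e" if "e \<in> up_path r par (leaf i)" for e
    using T that unfolding ultrametric_tree1_def by blast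
qed

lemma psd_ultrametric_tree1:
  assumes T: "ultrametric_tree1 V r par w leaf n"
  shows "psd n (\<lambda>i j. (1 - 1 / real n) - leaf_dist_matrix r par w leaf i j / 2)"
  unfolding psd_def
proof (intro conjI ballI allI)
  fix i j
  show "1 - 1 / real n - leaf_dist_matrix r par w leaf i j / 2 =
        1 - 1 / real n - leaf_dist_matrix r par w leaf j i / 2"
    by (simp add: leaf_dist_matrix_def tree_dist_commute)
next
  fix x :: "nat \<Rightarrow> real"
  define P where "P i = up_path r par (leaf i)" for i
  note unit = ultrametric_tree1_leaf_weights(1)[OF T, folded P_def]
  note nonneg = ultrametric_tree1_leaf_weights(2)[OF T, folded P_def]
  have entry: "1 - 1 / real n - leaf_dist_matrix r par w leaf i j / 2 = sum w (P i \<inter> P j) - 1 / n"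
    if "i \<in> {1..n}" "j \<in> {1..n}" for i j
    using unit[OF that(1)] unit[OF that(2)]
    by (simp add: leaf_dist_matrix_def tree_dist_eq_sum_up_paths P_def) (simp add: field_simps)
  have "(\<Sum>i=1..n. \<Sum>j=1..n. x i * (1 - 1 / real n - leaf_dist_matrix r par w leaf i j / 2) * x j)
      = (\<Sum>i=1..n. \<Sum>j=1..n. x i * sum w (P i \<inter> P j) * x j - x i * x j / n)"
  proof (intro sum.cong refl)
    fix i j assume "i \<in> {1..n}" "j \<in> {1..n}"
    show "x i * (1 - 1 / real n - leaf_dist_matrix r par w leaf i j / 2) * x j
        = x i * sum w (P i \<inter> P j) * x j - x i * x j / n"
      unfolding entry[OF \<open>i \<in> {1..n}\<close> \<open>j \<in> {1..n}\<close>] by (simp add: algebra_simps)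
  qed
  also have "\<dots> = (\<Sum>i=1..n. \<Sum>j=1..n. x i * sum w (P i \<inter> P j) * x j) - (\<Sum>i=1..n. x i)\<^sup>2 / n"
    by (simp add: sum_subtractf power2_eq_square sum_product sum_divide_distrib)
  also have "\<dots> \<ge> 0"
  proof -
    have "(\<Sum>i=1..n. x i)\<^sup>2 / card {1..n} \<le> (\<Sum>i=1..n. \<Sum>j=1..n. x i * sum w (P i \<inter> P j) * x j)"
      by (rule mean_square_le_quadratic_form_inter_weights) (use unit nonneg in \<open>auto simp: P_def\<close>)
    then show ?thesis by simp
  qed
  finally show "0 \<le> (\<Sum>i=1..n. \<Sum>j=1..n.
      x i * (1 - 1 / real n - leaf_dist_matrix r par w leaf i j / 2) * x j)" .
qed

lemma up_path_star:
  assumes "v \<noteq> r"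
  shows "up_path r (\<lambda>_. r) v = {v}"
proof -
  have "height_steps r (\<lambda>_. r) v = 1"
    unfolding height_steps_def
  proof (rule Least_equality)
    fix k assume "((\<lambda>_. r) ^^ k) v = r"
    then show "1 \<le> k" using assms by (cases k) auto
  qed simp
  then show ?thesis
    by (simp add: up_path_def)
qed

lemma ultrametric_tree1_star: "ultrametric_tree1 {0..n} 0 (\<lambda>_. 0) (\<lambda>_. 1) id n"
proof -
  have leaves: "tree_leaves {0..n} 0 (\<lambda>_. 0) = {1..n}"
    unfolding tree_leaves_def by auto
  show ?thesis
    unfolding ultrametric_tree1_def rooted_tree_def leaves
    by (auto simp: tree_dist_root up_path_star intro: exI[of _ 1])
qed

lemma leaf_dist_matrix_star:
  assumes "i \<noteq> 0" "j \<noteq> 0"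
  shows "leaf_dist_matrix 0 (\<lambda>_. 0) (\<lambda>_. 1) id i j = (if i = j then 0 else 2)"
  using assms by (auto simp: leaf_dist_matrix_def tree_dist_def up_path_star insert_Diff_if)

lemma not_psd_star:
  assumes "n \<ge> 1" and "c < 1 - 1 / real n"
  shows "\<not> psd n (\<lambda>i j. c - leaf_dist_matrix 0 (\<lambda>_. 0) (\<lambda>_. 1) id i j / 2)"
proof
  assume psd: "psd n (\<lambda>i j. c - leaf_dist_matrix 0 (\<lambda>_. 0) (\<lambda>_. 1) id i j / 2)"
  have "0 \<le> (\<Sum>i=1..n. \<Sum>j=1..n. c - leaf_dist_matrix 0 (\<lambda>_. 0) (\<lambda>_. 1) id i j / 2)"
    using psd[unfolded psd_def, THEN conjunct2, rule_format, of "\<lambda>_. 1"] by simp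
  also have "\<dots> = (\<Sum>i=1..n. \<Sum>j=1..n. (c - 1) + (if i = j then 1 else 0))"
    by (intro sum.cong refl) (simp add: leaf_dist_matrix_star)
  also have "\<dots> = (\<Sum>i=1..n. n * (c - 1) + 1)"
    by (intro sum.cong refl) (simp add: sum.distrib)
  also have "\<dots> = n * (n * (c - 1) + 1)"
    by simp
  also have "\<dots> < 0"
  proof -
    have n: "0 < real n" using assms(1) by simp
    then have "real n * (c - 1) + 1 < 0" using assms(2) by (simp add: field_simps)
    then show ?thesis using n by (simp add: mult_pos_neg)
  qed
  finally show False by simp
qed

theorem theorem1p8:
  fixes n :: nat
  assumes "n \<ge> 1"
  shows "(\<forall>(V :: 'v set) r par w leaf.
            ultrametric_tree1 V r par w leaf n \<longrightarrow>
            psd n (\<lambda>i j. (1 - 1 / real n) - leaf_dist_matrix r par w leaf i j / 2))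
       \<and> (\<forall>c :: real. c < 1 - 1 / real n \<longrightarrow>
            (\<exists>(V :: nat set) r par w leaf.
               ultrametric_tree1 V r par w leaf n \<and>
               \<not> psd n (\<lambda>i j. c - leaf_dist_matrix r par w leaf i j / 2)))"
proof (intro conjI allI impI)
  fix V :: "'v set" and r par w leaf
  assume "ultrametric_tree1 V r par w leaf n"
  then show "psd n (\<lambda>i j. (1 - 1 / real n) - leaf_dist_matrix r par w leaf i j / 2)"
    by (rule psd_ultrametric_tree1)
next
  fix c :: real
  assume "c < 1 - 1 / real n"
  then show "\<exists>(V :: nat set) r par w leaf. ultrametric_tree1 V r par w leaf n \<and>
               \<not> psd n (\<lambda>i j. c - leaf_dist_matrix r par w leaf i j / 2)"
    using ultrametric_tree1_star not_psd_star[OF assms] by blast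
qed

end
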